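(* Let $V$ be a space. (i) $V$ is CM if and only if $V$ is homothetic to $\mathbb{Q}(\sqrt{-d})$ for some squarefree positive integer $d$. (ii) For a squarefree positive integer $d\neq 1,3$, the rational angles in $\mathbb{Q}(\sqrt{-d})$ are, up to equivalence, precisely those of the form $(v,\sqrt{-d}\,v)$ with $v\in\mathbb{Q}(\sqrt{-d})\setminus\{0\}$. (iii) The rational angles in $\mathbb{Q}(i)$ are, up to equivalence, precisely those of the form $(v,\lambda v)$ with $v\in\mathbb{Q}(i)\setminus\{0\}$ and $\lambda\in\{i,i+1,i-1\}$. (iv) The rational angles in $\mathbb{Q}(\sqrt{-3})$ are, up to equivalence, precisely those of the form $(v,\lambda v)$ with $v\in\mathbb{Q}(\sqrt{-3})\setminus\{0\}$ and $\lambda\in\{\sqrt{-3},\zeta,\zeta-1,\zeta+1,\zeta+2\}$, where $\zeta=\frac{-1+\sqrt{-3}}{2}$.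
   Context: A space is a $2$-dimensional $\mathbb{Q}$-vector subspace $V\subset\mathbb{C}$ containing two $\mathbb{R}$-linearly independent vectors. Spaces $V_1,V_2$ are homothetic if $V_2=\lambda V_1$ for some $\lambda\in\mathbb{C}^*$. $V$ is CM (has complex multiplication) if there is $\lambda\in\mathbb{C}\setminus\mathbb{Q}$ with $\lambda V\subseteq V$. A rational angle of $V$ is an ordered pair of distinct lines $(\mathbb{R}v_1,\mathbb{R}v_2)$, written $(v_1,v_2)$, with $v_1,v_2\in V\setminus\{0\}$, $v_2/v_1\notin\mathbb{R}$ and $\arg(v_2/v_1)\in\mathbb{Q}\pi$. Two rational angles are equivalent if one is obtained from the other by swapping the two lines. *)

theory Defs
  imports "HOL-Analysis.Analysis" "HOL-Computational_Algebra.Squarefree"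
begin

definition is_space :: "complex set \<Rightarrow> bool" where
  "is_space V \<longleftrightarrow>
     (\<exists>a b. a \<in> V \<and> b \<in> V \<and>
        (\<forall>p q :: rat. of_rat p * a + of_rat q * b = 0 \<longrightarrow> p = 0 \<and> q = 0) \<and>
        V = {of_rat p * a + of_rat q * b | p q :: rat. True}) \<and>
     (\<exists>u w. u \<in> V \<and> w \<in> V \<and>
        (\<forall>r s :: real. of_real r * u + of_real s * w = 0 \<longrightarrow> r = 0 \<and> s = 0))"

definition homothetic :: "complex set \<Rightarrow> complex set \<Rightarrow> bool" where
  "homothetic V1 V2 \<longleftrightarrow> (\<exists>l. l \<noteq> 0 \<and> V2 = (\<lambda>v. l * v) ` V1)"

definition is_CM :: "complex set \<Rightarrow> bool" where
  "is_CM V \<longleftrightarrow> (\<exists>l. l \<notin> \<rat> \<and> (\<lambda>v. l * v) ` V \<subseteq> V)"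

definition sqrt_neg :: "nat \<Rightarrow> complex" where
  "sqrt_neg d = \<i> * of_real (sqrt (real d))"

definition Qsqrt_neg :: "nat \<Rightarrow> complex set" where
  "Qsqrt_neg d = {of_rat p + of_rat q * sqrt_neg d | p q :: rat. True}"

definition rline :: "complex \<Rightarrow> complex set" where
  "rline v = {of_real r * v | r :: real. True}"

definition rational_angle :: "complex set \<Rightarrow> complex set \<times> complex set \<Rightarrow> bool" where
  "rational_angle V A \<longleftrightarrow>
     (\<exists>v1 v2. v1 \<in> V - {0} \<and> v2 \<in> V - {0} \<and> v2 / v1 \<notin> \<real> \<and>
        Arg (v2 / v1) / pi \<in> \<rat> \<and> A = (rline v1, rline v2))"

definition angle_equiv :: "complex set \<times> complex set \<Rightarrow> complex set \<times> complex set \<Rightarrow> bool" where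
  "angle_equiv A B \<longleftrightarrow> A = B \<or> A = (snd B, fst B)"

definition angles_given_by :: "complex set \<Rightarrow> complex set \<Rightarrow> bool" where
  "angles_given_by V L \<longleftrightarrow>
     (\<forall>A. rational_angle V A \<longleftrightarrow>
        (\<exists>v \<in> V - {0}. \<exists>l \<in> L. angle_equiv A (rline v, rline (l * v))))"

end

(* A rational angle of Q(sqrt(-d)) is a pair (v, z v) with z in Q(sqrt(-d)) non-real and
   Arg z a rational multiple of pi, i.e. some power z^n real.  Scaling z by a rational
   number we may take z = t + sqrt(-d).  Then w = z / cnj z is a root of unity with
   rational trace 2 (t^2 - d) / (t^2 + d); such a trace is an integer (via Lucas sequences),
   and it lies in [-2, 2).  For squarefree d the four possible values force t = 0, or
   d = 1 and t = +-1, or d = 3 and t in {+-1, +-3}, which are the listed angles.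

   If l V <= V with l irrational, write V = a (Q + Q tau): then l = p + q tau with q <> 0
   and l tau in Q + Q tau, so the non-real tau is a root of a rational quadratic and
   hence tau = x + y sqrt(-d) with d squarefree, making V homothetic to Q(sqrt(-d)). *)

theory Submission
  imports Defs
begin

section \<open>Rational angles and roots of unity\<close>

lemma Arg_div_pi_in_Rats_iff:
  fixes z :: complex
  assumes "z \<noteq> 0"
  shows "Arg z / pi \<in> \<rat> \<longleftrightarrow> (\<exists>n>0. z ^ n \<in> \<real>)"
proof -
  have power_real_iff: "z ^ n \<in> \<real> \<longleftrightarrow> sin (real n * Arg z) = 0" for n
  proof -
    have "z ^ n = rcis (cmod z ^ n) (real n * Arg z)"
      by (metis DeMoivre2 rcis_cmod_Arg)
    then show ?thesis
      using assms by (simp add: complex_is_Real_iff rcis_def)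
  qed
  show ?thesis
  proof
    assume "Arg z / pi \<in> \<rat>"
    then obtain a b where "b > 0" "Arg z / pi = of_int a / of_int b"
      using Rats_cases' by metis
    then have "real (nat b) * Arg z = of_int a * pi"
      by (simp add: field_simps)
    then have "z ^ nat b \<in> \<real>"
      by (simp add: power_real_iff sin_zero_iff_int2)
    with \<open>b > 0\<close> show "\<exists>n>0. z ^ n \<in> \<real>"
      by (intro exI[of _ "nat b"]) simp
  next
    assume "\<exists>n>0. z ^ n \<in> \<real>"
    then obtain n where "n > 0" "sin (real n * Arg z) = 0"
      using power_real_iff by blast
    then obtain i :: int where "real n * Arg z = of_int i * pi"
      using sin_zero_iff_int2 by blast
    with \<open>n > 0\<close> have "Arg z / pi = of_int i / of_nat n"
      by (simp add: field_simps)
    then show "Arg z / pi \<in> \<rat>"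
      by simp
  qed
qed

fun lucas_V :: "int \<Rightarrow> int \<Rightarrow> nat \<Rightarrow> int" where
  "lucas_V P Q 0 = 2"
| "lucas_V P Q (Suc 0) = P"
| "lucas_V P Q (Suc (Suc n)) = P * lucas_V P Q (Suc n) - Q * lucas_V P Q n"

lemma lucas_V_eq_power_sum:
  fixes u v :: "'a :: comm_ring_1"
  assumes "u + v = of_int P" "u * v = of_int Q"
  shows "of_int (lucas_V P Q n) = u ^ n + v ^ n"
  using assms
proof (induction P Q n rule: lucas_V.induct)
  case (3 P Q n)
  have "of_int (lucas_V P Q (Suc (Suc n)))
      = (u + v) * (u ^ Suc n + v ^ Suc n) - (u * v) * (u ^ n + v ^ n)"
    using 3 by simp
  also have "\<dots> = u ^ Suc (Suc n) + v ^ Suc (Suc n)"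
    by (simp add: algebra_simps)
  finally show ?case .
qed simp_all

lemma coprime_lucas_V:
  assumes "coprime P Q"
  shows "coprime (lucas_V P Q (Suc n)) Q"
proof (induction n)
  case (Suc n)
  have "coprime Q (P * lucas_V P Q (Suc n))"
    using Suc assms by (simp add: coprime_commute)
  then have "coprime Q ((- lucas_V P Q n) * Q + P * lucas_V P Q (Suc n))"
    by (simp only: coprime_iff_gcd_eq_1 gcd_add_mult)
  then show ?case
    by (simp add: coprime_commute algebra_simps)
qed (use assms in simp)

lemma root_of_unity_rational_trace_in_Ints:
  fixes w :: complex
  assumes "w ^ n = 1" "n > 0" "w + cnj w = of_rat c"
  shows "c \<in> \<int>"
proof -
  obtain p q where pq: "quotient_of c = (p, q)"
    by force
  have "q > 0" "coprime p q" "c = of_int p / of_int q"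
    using quotient_of_denom_pos[OF pq] quotient_of_coprime[OF pq] quotient_of_div[OF pq] by auto
  have "cmod w = 1"
    using power_eq_1_iff[OF assms(1)] assms(2) by simp
  then have "w * cnj w = 1"
    by (simp add: complex_mult_cnj cmod_def)
  \<comment> \<open>\<open>q w\<close> and \<open>q cnj w\<close> have sum \<open>p\<close> and product \<open>q\<^sup>2\<close>, so their power sums are the
    Lucas numbers V_k(p, q^2), which are coprime to \<open>q\<close> for k > 0; yet \<open>w ^ Suc n = w\<close>
    makes V_(n+1) = q^n p.\<close>
  have "of_int q * (w + cnj w) = of_int p"
    using assms(3) \<open>c = of_int p / of_int q\<close> \<open>q > 0\<close> by (simp add: of_rat_divide)
  then have sum: "of_int q * w + of_int q * cnj w = of_int p"
    by (simp add: algebra_simps)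
  have prod: "(of_int q * w) * (of_int q * cnj w) = of_int (q\<^sup>2)"
    using \<open>w * cnj w = 1\<close> by (simp add: algebra_simps power2_eq_square)
  have "w ^ Suc n + cnj w ^ Suc n = w + cnj w"
    using assms(1) by (simp flip: complex_cnj_power)
  have "(of_int (lucas_V p (q\<^sup>2) (Suc n)) :: complex)
      = of_int q ^ Suc n * (w ^ Suc n + cnj w ^ Suc n)"
    unfolding lucas_V_eq_power_sum[OF sum prod] by (simp only: power_mult_distrib distrib_left)
  also have "\<dots> = of_int q ^ n * (of_int q * (w + cnj w))"
    using \<open>w ^ Suc n + cnj w ^ Suc n = w + cnj w\<close> by simp
  also have "\<dots> = of_int (q ^ n * p)"
    using sum by (simp add: algebra_simps)
  finally have "lucas_V p (q\<^sup>2) (Suc n) = q ^ n * p"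
    by (simp only: of_int_eq_iff)
  then have "q dvd lucas_V p (q\<^sup>2) (Suc n)"
    using assms(2) by (simp add: dvd_power)
  moreover have "coprime (lucas_V p (q\<^sup>2) (Suc n)) q"
    using coprime_lucas_V[of p "q\<^sup>2" n] \<open>coprime p q\<close> by simp
  ultimately have "q = 1"
    using \<open>q > 0\<close> coprime_common_divisor[of _ q q] by auto
  then show ?thesis
    using \<open>c = of_int p / of_int q\<close> by simp
qed

section \<open>Squarefree integers and rational squares\<close>

lemma nat_eq_rat_square_imp_square:
  assumes "of_nat N = (r :: rat)\<^sup>2"
  shows "\<exists>k. N = k\<^sup>2"
proof -
  obtain a b where ab: "quotient_of r = (a, b)"
    by force
  have "b > 0" "coprime a b" "r = of_int a / of_int b"
    using quotient_of_denom_pos[OF ab] quotient_of_coprime[OF ab] quotient_of_div[OF ab] by auto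
  have "of_int (int N * b\<^sup>2) = (r * of_int b)\<^sup>2"
    using assms by (simp add: power_mult_distrib)
  also have "\<dots> = of_int (a\<^sup>2)"
    using \<open>b > 0\<close> \<open>r = of_int a / of_int b\<close> by simp
  finally have "of_int (int N * b\<^sup>2) = (of_int (a\<^sup>2) :: rat)" .
  then have N: "int N * b\<^sup>2 = a\<^sup>2"
    by (simp only: of_int_eq_iff)
  have "is_unit (b\<^sup>2)"
    using \<open>coprime a b\<close> N by (metis coprime_common_divisor coprime_power_left_iff coprime_commute dvd_refl dvd_triv_right)
  then have "b = 1"
    using \<open>b > 0\<close> by (simp add: power2_eq_1_iff)
  then have "int N = int ((nat \<bar>a\<bar>)\<^sup>2)"
    using N by simp
  then have "N = (nat \<bar>a\<bar>)\<^sup>2"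
    by (simp only: of_nat_eq_iff)
  then show ?thesis ..
qed

lemma squarefree_eq_rat_square:
  assumes "squarefree d" "of_nat d = (r :: rat)\<^sup>2"
  shows "d = 1"
proof -
  obtain k where "d = k\<^sup>2"
    using nat_eq_rat_square_imp_square[OF assms(2)] ..
  then have "is_unit k"
    using squarefreeD[OF assms(1)] by simp
  then show ?thesis
    using \<open>d = k\<^sup>2\<close> by simp
qed

lemma squarefree_prime_times_eq_rat_square:
  assumes "prime p" "squarefree d" "of_nat (p * d) = (r :: rat)\<^sup>2"
  shows "d = p"
proof -
  obtain k where k: "p * d = k\<^sup>2"
    using nat_eq_rat_square_imp_square[OF assms(3)] ..
  then have "p dvd k"
    using assms(1) by (metis dvd_triv_left prime_dvd_power)
  then obtain j where "k = p * j" ..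
  with k assms(1) have "d = p * j\<^sup>2"
    by (simp add: power2_eq_square prime_gt_0_nat)
  then have "is_unit j"
    using squarefreeD[OF assms(2)] by simp
  then show ?thesis
    using \<open>d = p * j\<^sup>2\<close> by simp
qed

lemma rat_pos_eq_squarefree_times_square:
  assumes "E > (0 :: rat)"
  shows "\<exists>d f. squarefree (d :: nat) \<and> E = of_nat d * f\<^sup>2"
proof -
  obtain m n where mn: "quotient_of E = (m, n)"
    by force
  have "n > 0" "E = of_int m / of_int n"
    using quotient_of_denom_pos[OF mn] quotient_of_div[OF mn] by auto
  then have "m > 0"
    using assms by (simp add: zero_less_divide_iff)
  define N where "N = nat (m * n)"
  have "E = of_int (m * n) / (of_int n)\<^sup>2"
    using \<open>E = of_int m / of_int n\<close> \<open>n > 0\<close> by (simp add: power2_eq_square)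
  also have "of_int (m * n) = (of_nat N :: rat)"
    using \<open>m > 0\<close> \<open>n > 0\<close> by (simp add: N_def)
  also have "\<dots> = of_nat (squarefree_part N) * (of_nat (square_part N))\<^sup>2"
    by (metis of_nat_mult of_nat_power squarefree_decompose)
  finally have "E = of_nat (squarefree_part N) * (of_nat (square_part N) / of_int n)\<^sup>2"
    by (simp add: power_divide)
  then show ?thesis
    using squarefree_squarefree_part by blast
qed

section \<open>The field Q(sqrt(-d))\<close>

lemma of_rat_complex_eq_of_real: "(of_rat x :: complex) = of_real (of_rat x)"
  by (cases x) (simp add: of_rat_rat)

lemma Re_of_rat [simp]: "Re (of_rat x) = of_rat x"
  by (simp add: of_rat_complex_eq_of_real)

lemma Im_of_rat [simp]: "Im (of_rat x) = 0"
  by (simp add: of_rat_complex_eq_of_real)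

lemma sqrt_neg_squared: "sqrt_neg d ^ 2 = - of_nat d"
  by (simp add: sqrt_neg_def power_mult_distrib flip: of_real_power)

definition Qsqrt_neg_of :: "nat \<Rightarrow> rat \<Rightarrow> rat \<Rightarrow> complex" where
  "Qsqrt_neg_of d x y = of_rat x + of_rat y * sqrt_neg d"

lemma Re_Qsqrt_neg_of [simp]: "Re (Qsqrt_neg_of d x y) = of_rat x"
  by (simp add: Qsqrt_neg_of_def sqrt_neg_def)

lemma Im_Qsqrt_neg_of [simp]: "Im (Qsqrt_neg_of d x y) = of_rat y * sqrt (real d)"
  by (simp add: Qsqrt_neg_of_def sqrt_neg_def)

lemma Qsqrt_neg_iff: "z \<in> Qsqrt_neg d \<longleftrightarrow> (\<exists>x y. z = Qsqrt_neg_of d x y)"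
  by (auto simp: Qsqrt_neg_def Qsqrt_neg_of_def)

lemma Qsqrt_neg_of_in_Qsqrt_neg [simp]: "Qsqrt_neg_of d x y \<in> Qsqrt_neg d"
  by (auto simp: Qsqrt_neg_iff)

lemma Qsqrt_neg_of_eq_0_iff:
  "d > 0 \<Longrightarrow> Qsqrt_neg_of d x y = 0 \<longleftrightarrow> x = 0 \<and> y = 0"
  by (auto simp: complex_eq_iff)

lemma Qsqrt_neg_of_in_Reals_iff:
  "d > 0 \<Longrightarrow> Qsqrt_neg_of d x y \<in> \<real> \<longleftrightarrow> y = 0"
  by (auto simp: complex_is_Real_iff)

lemma Qsqrt_neg_of_mult:
  "Qsqrt_neg_of d a b * Qsqrt_neg_of d c e = Qsqrt_neg_of d (a * c - of_nat d * b * e) (a * e + b * c)"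
proof -
  have "sqrt (real d) * sqrt (real d) = real d"
    by simp
  then show ?thesis
    by (simp add: complex_eq_iff of_rat_mult of_rat_diff of_rat_add algebra_simps)
qed

lemma Qsqrt_neg_of_scale:
  "Qsqrt_neg_of d (c * x) (c * y) = of_rat c * Qsqrt_neg_of d x y"
  by (simp add: Qsqrt_neg_of_def of_rat_mult algebra_simps)

lemma inverse_Qsqrt_neg_of:
  fixes x y :: rat and d :: nat
  defines "N \<equiv> x\<^sup>2 + of_nat d * y\<^sup>2"
  shows "inverse (Qsqrt_neg_of d x y) = Qsqrt_neg_of d (x / N) (- y / N)"
proof (cases "N = 0")
  case True
  then have "x = 0" "of_nat d * y\<^sup>2 = 0"
    unfolding N_def by (simp_all add: add_nonneg_eq_0_iff)
  then show ?thesis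
    using True by (auto simp: Qsqrt_neg_of_def sqrt_neg_def)
next
  case False
  have "x * (x / N) - of_nat d * y * (- y / N) = (x\<^sup>2 + of_nat d * y\<^sup>2) / N"
    by (simp add: add_divide_distrib power2_eq_square)
  also have "\<dots> = 1"
    using False by (simp add: N_def)
  finally have "x * (x / N) - of_nat d * y * (- y / N) = 1" .
  moreover have "x * (- y / N) + y * (x / N) = 0"
    by simp
  ultimately have "Qsqrt_neg_of d x y * Qsqrt_neg_of d (x / N) (- y / N) = 1"
    unfolding Qsqrt_neg_of_mult by (simp only:) (simp add: Qsqrt_neg_of_def)
  then show ?thesis
    by (simp add: inverse_unique)
qed

lemma Qsqrt_neg_mult_closed:
  "u \<in> Qsqrt_neg d \<Longrightarrow> v \<in> Qsqrt_neg d \<Longrightarrow> u * v \<in> Qsqrt_neg d"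
  by (auto simp: Qsqrt_neg_iff[of u] Qsqrt_neg_iff[of v] Qsqrt_neg_of_mult)

lemma Qsqrt_neg_inverse_closed:
  "u \<in> Qsqrt_neg d \<Longrightarrow> inverse u \<in> Qsqrt_neg d"
  by (auto simp: Qsqrt_neg_iff[of u] inverse_Qsqrt_neg_of)

lemma Qsqrt_neg_divide_closed:
  "u \<in> Qsqrt_neg d \<Longrightarrow> v \<in> Qsqrt_neg d \<Longrightarrow> u / v \<in> Qsqrt_neg d"
  by (simp add: divide_inverse Qsqrt_neg_mult_closed Qsqrt_neg_inverse_closed)

section \<open>Rational angles in Q(sqrt(-d))\<close>

lemma Qsqrt_neg_power_real_trace_in_Ints:
  assumes "d > 0" "n > 0" "Qsqrt_neg_of d t 1 ^ n \<in> \<real>"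
  shows "2 * (t\<^sup>2 - of_nat d) / (t\<^sup>2 + of_nat d) \<in> \<int>"
proof -
  define z where "z = Qsqrt_neg_of d t 1"
  have "z \<noteq> 0"
    using assms(1) by (simp add: z_def Qsqrt_neg_of_eq_0_iff)
  have norm: "z * cnj z = of_rat (t\<^sup>2 + of_nat d)"
    by (simp add: z_def complex_mult_cnj of_rat_complex_eq_of_real of_rat_add of_rat_power power_mult_distrib)
  have "z\<^sup>2 + (cnj z)\<^sup>2 = of_rat (2 * (t\<^sup>2 - of_nat d))"
    by (simp add: z_def complex_eq_iff of_rat_mult of_rat_diff of_rat_power power2_eq_square)
  \<comment> \<open>\<open>z / cnj z\<close> is a root of unity whose trace is the rational number in question.\<close>
  then have "z / cnj z + cnj (z / cnj z) = of_rat (2 * (t\<^sup>2 - of_nat d) / (t\<^sup>2 + of_nat d))"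
    using \<open>z \<noteq> 0\<close> norm by (simp add: field_simps power2_eq_square of_rat_divide)
  moreover have "(z / cnj z) ^ n = 1"
    using assms(3) \<open>z \<noteq> 0\<close> by (simp add: z_def power_divide Reals_cnj_iff flip: complex_cnj_power)
  ultimately show ?thesis
    using root_of_unity_rational_trace_in_Ints assms(2) by blast
qed

lemma Qsqrt_neg_power_real_trace_cases:
  assumes "d > 0" "n > 0" "Qsqrt_neg_of d t 1 ^ n \<in> \<real>"
  shows "\<exists>c \<in> {-2, -1, 0, 1}. 2 * (t\<^sup>2 - of_nat d) = c * (t\<^sup>2 + of_nat d)"
proof -
  obtain k :: int where "2 * (t\<^sup>2 - of_nat d) / (t\<^sup>2 + of_nat d) = of_int k"
    using Qsqrt_neg_power_real_trace_in_Ints[OF assms] Ints_cases by metis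
  moreover define M where "M = t\<^sup>2 + of_nat d"
  moreover have "M > 0"
    using assms(1) by (simp add: M_def add_nonneg_pos)
  ultimately have k: "2 * (t\<^sup>2 - of_nat d) = of_int k * M"
    by (simp add: field_simps)
  have "of_int k * M < 2 * M" "-2 * M \<le> of_int k * M"
    unfolding k[symmetric] using assms(1) by (simp_all add: M_def)
  then have "of_int k < (2 :: rat)" "-2 \<le> (of_int k :: rat)"
    using mult_less_cancel_right_pos[OF \<open>M > 0\<close>] mult_le_cancel_right_pos[OF \<open>M > 0\<close>] by blast+
  then have "k \<in> {-2, -1, 0, 1}"
    by auto
  then show ?thesis
    using k by (auto simp: M_def)
qed

lemma Qsqrt_neg_power_real_cases:
  assumes "squarefree d" "n > 0" "Qsqrt_neg_of d t 1 ^ n \<in> \<real>"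
  shows "t = 0 \<or> (d = 1 \<and> t \<in> {1, -1}) \<or> (d = 3 \<and> t \<in> {1, -1, 3, -3})"
proof -
  have "d > 0"
    using assms(1) by (auto intro!: gr0I)
  then obtain c where "c \<in> {-2, -1, 0, 1}" and c: "2 * (t\<^sup>2 - of_nat d) = c * (t\<^sup>2 + of_nat d)"
    using Qsqrt_neg_power_real_trace_cases assms(2,3) by blast
  have prime_3: "prime (3 :: nat)"
    by simp
  from \<open>c \<in> {-2, -1, 0, 1}\<close> show ?thesis
  proof (elim insertE emptyE)
    assume "c = -2"
    then show ?thesis
      using c by simp
  next
    assume "c = -1"
    then have t: "3 * t\<^sup>2 = of_nat d"
      using c by simp
    then have "of_nat (3 * d) = (3 * t)\<^sup>2"
      by (simp add: power_mult_distrib flip: t)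
    then have "d = 3"
      using squarefree_prime_times_eq_rat_square[OF prime_3 assms(1)] by blast
    then show ?thesis
      using t by (auto simp: power2_eq_1_iff)
  next
    assume "c = 0"
    then have t: "t\<^sup>2 = of_nat d"
      using c by simp
    then have "d = 1"
      using squarefree_eq_rat_square assms(1) by metis
    then show ?thesis
      using t by (simp add: power2_eq_1_iff)
  next
    assume "c = 1"
    then have t: "t\<^sup>2 = 3 * of_nat d"
      using c by simp
    then have "d = 3"
      using squarefree_prime_times_eq_rat_square[OF prime_3 assms(1), of t] by simp
    then have "t\<^sup>2 = 3\<^sup>2"
      using t by simp
    then have "t = 3 \<or> t = -3"
      by (simp only: power2_eq_iff)
    then show ?thesis
      using \<open>d = 3\<close> by auto
  qed
qed

lemma rline_scaleR:
  assumes "r \<noteq> 0"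
  shows "rline (of_real r * u) = rline u"
proof
  have scale: "rline (of_real c * w) \<subseteq> rline w" for c w
    by (auto simp: rline_def) (metis mult.assoc of_real_mult)
  then show "rline (of_real r * u) \<subseteq> rline u" .
  have "of_real (1 / r) * (of_real r * u) = u"
    using assms by (simp flip: mult.assoc of_real_mult)
  then show "rline u \<subseteq> rline (of_real r * u)"
    using scale[of "1 / r" "of_real r * u"] by simp
qed

lemma rational_angle_Qsqrt_neg_iff:
  "rational_angle (Qsqrt_neg d) A \<longleftrightarrow>
     (\<exists>v \<in> Qsqrt_neg d - {0}. \<exists>z \<in> Qsqrt_neg d.
        z \<notin> \<real> \<and> (\<exists>n>0. z ^ n \<in> \<real>) \<and> A = (rline v, rline (z * v)))"
proof
  assume "rational_angle (Qsqrt_neg d) A"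
  then obtain v1 v2 where v: "v1 \<in> Qsqrt_neg d - {0}" "v2 \<in> Qsqrt_neg d - {0}"
    and z: "v2 / v1 \<notin> \<real>" "Arg (v2 / v1) / pi \<in> \<rat>" and A: "A = (rline v1, rline v2)"
    unfolding rational_angle_def by blast
  have "v2 / v1 \<in> Qsqrt_neg d"
    using v Qsqrt_neg_divide_closed by blast
  moreover have "\<exists>n>0. (v2 / v1) ^ n \<in> \<real>"
    using v z Arg_div_pi_in_Rats_iff by simp
  moreover have "A = (rline v1, rline (v2 / v1 * v1))"
    using v A by simp
  ultimately show "\<exists>v \<in> Qsqrt_neg d - {0}. \<exists>z \<in> Qsqrt_neg d.
      z \<notin> \<real> \<and> (\<exists>n>0. z ^ n \<in> \<real>) \<and> A = (rline v, rline (z * v))"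
    using v z by blast
next
  assume "\<exists>v \<in> Qsqrt_neg d - {0}. \<exists>z \<in> Qsqrt_neg d.
      z \<notin> \<real> \<and> (\<exists>n>0. z ^ n \<in> \<real>) \<and> A = (rline v, rline (z * v))"
  then obtain v z where v: "v \<in> Qsqrt_neg d - {0}" and z: "z \<in> Qsqrt_neg d" "z \<notin> \<real>"
    "\<exists>n>0. z ^ n \<in> \<real>" and A: "A = (rline v, rline (z * v))"
    by blast
  have "z \<noteq> 0"
    using z by auto
  then have "z * v \<in> Qsqrt_neg d - {0}" "z * v / v = z" "Arg z / pi \<in> \<rat>"
    using v z Qsqrt_neg_mult_closed Arg_div_pi_in_Rats_iff by auto
  then show "rational_angle (Qsqrt_neg d) A"
    unfolding rational_angle_def using v z A by (intro exI[of _ v] exI[of _ "z * v"]) auto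
qed

lemma rational_angle_swap:
  assumes "rational_angle V (P, Q)"
  shows "rational_angle V (Q, P)"
proof -
  obtain v1 v2 where v: "v1 \<in> V - {0}" "v2 \<in> V - {0}" and z: "v2 / v1 \<notin> \<real>"
    "Arg (v2 / v1) / pi \<in> \<rat>" and PQ: "P = rline v1" "Q = rline v2"
    using assms unfolding rational_angle_def by blast
  then obtain n where "n > 0" "(v2 / v1) ^ n \<in> \<real>"
    using Arg_div_pi_in_Rats_iff by auto
  then have "(v1 / v2) ^ n \<in> \<real>"
    by (metis Reals_inverse inverse_divide power_inverse)
  then have "Arg (v1 / v2) / pi \<in> \<rat>"
    using v \<open>n > 0\<close> Arg_div_pi_in_Rats_iff by auto
  moreover have "v1 / v2 \<notin> \<real>"
    using z by (metis Reals_inverse inverse_divide)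
  ultimately show ?thesis
    unfolding rational_angle_def using v PQ by blast
qed

lemma Qsqrt_neg_nonreal_cases:
  assumes "z \<in> Qsqrt_neg d" "z \<notin> \<real>"
  obtains y t where "y \<noteq> 0" "z = of_real (of_rat y) * Qsqrt_neg_of d t 1"
proof -
  obtain x y where xy: "z = Qsqrt_neg_of d x y"
    using assms(1) Qsqrt_neg_iff by blast
  with assms(2) have "y \<noteq> 0"
    by (auto simp: Qsqrt_neg_of_def of_rat_complex_eq_of_real)
  then have "z = of_real (of_rat y) * Qsqrt_neg_of d (x / y) 1"
    using Qsqrt_neg_of_scale[of d y "x / y" 1] by (simp add: xy of_rat_complex_eq_of_real)
  with \<open>y \<noteq> 0\<close> show ?thesis
    using that by blast
qed

text \<open>Up to a nonzero rational factor, every non-real element of \<open>Q(sqrt(-d))\<close> is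
  \<open>t + sqrt(-d)\<close>; so the last hypothesis only needs to treat those.\<close>

lemma angles_given_byI:
  assumes L: "L \<subseteq> Qsqrt_neg d" "\<And>l. l \<in> L \<Longrightarrow> l \<notin> \<real> \<and> (\<exists>n>0. l ^ n \<in> \<real>)"
    and cover: "\<And>t n. n > 0 \<Longrightarrow> Qsqrt_neg_of d t 1 ^ n \<in> \<real> \<Longrightarrow>
      \<exists>l\<in>L. \<exists>r. r \<noteq> 0 \<and> Qsqrt_neg_of d t 1 = of_real r * l"
  shows "angles_given_by (Qsqrt_neg d) L"
  unfolding angles_given_by_def
proof (intro allI iffI)
  fix A
  assume "rational_angle (Qsqrt_neg d) A"
  then obtain v z n where v: "v \<in> Qsqrt_neg d - {0}" and z: "z \<in> Qsqrt_neg d" "z \<notin> \<real>"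
    and n: "n > 0" "z ^ n \<in> \<real>" and A: "A = (rline v, rline (z * v))"
    unfolding rational_angle_Qsqrt_neg_iff by blast
  obtain y t where "y \<noteq> 0" and zt: "z = of_real (of_rat y) * Qsqrt_neg_of d t 1"
    using Qsqrt_neg_nonreal_cases[OF z] by blast
  then have "Qsqrt_neg_of d t 1 ^ n = z ^ n / of_real (of_rat y ^ n)"
    by (simp add: power_mult_distrib)
  then have "Qsqrt_neg_of d t 1 ^ n \<in> \<real>"
    using n by simp
  then obtain l r where l: "l \<in> L" "r \<noteq> 0" "Qsqrt_neg_of d t 1 = of_real r * l"
    using cover n by blast
  then have zv: "z * v = of_real (of_rat y * r) * (l * v)"
    using zt by (simp add: algebra_simps)
  have "rline (z * v) = rline (l * v)"
    unfolding zv using \<open>y \<noteq> 0\<close> \<open>r \<noteq> 0\<close> by (intro rline_scaleR) simp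
  then show "\<exists>v\<in>Qsqrt_neg d - {0}. \<exists>l\<in>L. angle_equiv A (rline v, rline (l * v))"
    using A v l by (auto simp: angle_equiv_def)
next
  fix A
  assume "\<exists>v\<in>Qsqrt_neg d - {0}. \<exists>l\<in>L. angle_equiv A (rline v, rline (l * v))"
  then obtain v l where "v \<in> Qsqrt_neg d - {0}" "l \<in> L"
    and A: "angle_equiv A (rline v, rline (l * v))"
    by blast
  then have "rational_angle (Qsqrt_neg d) (rline v, rline (l * v))"
    unfolding rational_angle_Qsqrt_neg_iff using L by blast
  then show "rational_angle (Qsqrt_neg d) A"
    using A rational_angle_swap by (auto simp: angle_equiv_def)
qed

lemma angles_given_by_Qsqrt_neg:
  assumes "squarefree d" "d \<noteq> 1" "d \<noteq> 3"
  shows "angles_given_by (Qsqrt_neg d) {sqrt_neg d}"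
proof (rule angles_given_byI)
  have "d > 0"
    using assms(1) by (auto intro!: gr0I)
  have sqrt_neg: "sqrt_neg d = Qsqrt_neg_of d 0 1"
    by (simp add: Qsqrt_neg_of_def)
  show "{sqrt_neg d} \<subseteq> Qsqrt_neg d"
    by (simp add: sqrt_neg)
  show "l \<notin> \<real> \<and> (\<exists>n>0. l ^ n \<in> \<real>)" if "l \<in> {sqrt_neg d}" for l
    using that \<open>d > 0\<close> sqrt_neg_squared[of d]
    by (auto simp: sqrt_neg Qsqrt_neg_of_in_Reals_iff intro!: exI[of _ 2])
  show "\<exists>l\<in>{sqrt_neg d}. \<exists>r. r \<noteq> 0 \<and> Qsqrt_neg_of d t 1 = of_real r * l"
    if "n > 0" "Qsqrt_neg_of d t 1 ^ n \<in> \<real>" for t n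
    using Qsqrt_neg_power_real_cases[OF assms(1) that] assms(2,3) by (auto simp: sqrt_neg intro!: exI[of _ 1])
qed

lemma angles_given_by_Qsqrt_neg_1:
  "angles_given_by (Qsqrt_neg 1) {\<i>, \<i> + 1, \<i> - 1}"
proof -
  have L: "{\<i>, \<i> + 1, \<i> - 1} = (\<lambda>t. Qsqrt_neg_of 1 t 1) ` {0, 1, -1}"
    by (simp add: Qsqrt_neg_of_def sqrt_neg_def add.commute)
  show ?thesis
    unfolding L
  proof (rule angles_given_byI)
    show "l \<notin> \<real> \<and> (\<exists>n>0. l ^ n \<in> \<real>)" if "l \<in> (\<lambda>t. Qsqrt_neg_of 1 t 1) ` {0, 1, -1}" for l
      using that by (auto simp: Qsqrt_neg_of_in_Reals_iff numeral_eq_Suc Qsqrt_neg_of_mult intro!: exI[of _ 4])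
    show "\<exists>l \<in> (\<lambda>t. Qsqrt_neg_of 1 t 1) ` {0, 1, -1}. \<exists>r. r \<noteq> 0 \<and> Qsqrt_neg_of 1 t 1 = of_real r * l"
      if "n > 0" "Qsqrt_neg_of 1 t 1 ^ n \<in> \<real>" for t n
      using Qsqrt_neg_power_real_cases[OF _ that] by (auto intro!: exI[of _ 1])
  qed auto
qed

lemma angles_given_by_Qsqrt_neg_3:
  defines "\<zeta> \<equiv> (-1 + sqrt_neg 3) / 2"
  shows "angles_given_by (Qsqrt_neg 3) {sqrt_neg 3, \<zeta>, \<zeta> - 1, \<zeta> + 1, \<zeta> + 2}"
proof -
  define L where "L = insert (Qsqrt_neg_of 3 0 1) ((\<lambda>t. Qsqrt_neg_of 3 (t / 2) (1 / 2)) ` {-1, -3, 1, 3})"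
  have "sqrt_neg 3 = Qsqrt_neg_of 3 0 1" "\<zeta> = Qsqrt_neg_of 3 (-1 / 2) (1 / 2)"
    "\<zeta> - 1 = Qsqrt_neg_of 3 (-3 / 2) (1 / 2)" "\<zeta> + 1 = Qsqrt_neg_of 3 (1 / 2) (1 / 2)"
    "\<zeta> + 2 = Qsqrt_neg_of 3 (3 / 2) (1 / 2)"
    by (simp_all add: \<zeta>_def complex_eq_iff sqrt_neg_def of_rat_divide of_rat_minus)
  then have "{sqrt_neg 3, \<zeta>, \<zeta> - 1, \<zeta> + 1, \<zeta> + 2} = L"
    by (simp add: L_def)
  moreover have "angles_given_by (Qsqrt_neg 3) L"
  proof (rule angles_given_byI)
    show "L \<subseteq> Qsqrt_neg 3"
      by (auto simp: L_def)
    show "l \<notin> \<real> \<and> (\<exists>n>0. l ^ n \<in> \<real>)" if "l \<in> L" for l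
      using that unfolding L_def
      by (auto simp: Qsqrt_neg_of_in_Reals_iff numeral_eq_Suc Qsqrt_neg_of_mult intro!: exI[of _ 6])
    show "\<exists>l \<in> L. \<exists>r. r \<noteq> 0 \<and> Qsqrt_neg_of 3 t 1 = of_real r * l"
      if "n > 0" "Qsqrt_neg_of 3 t 1 ^ n \<in> \<real>" for t n
    proof -
      have "squarefree (3 :: nat)"
        by (simp add: squarefree_prime)
      then have "t = 0 \<or> t \<in> {-1, -3, 1, 3}"
        using Qsqrt_neg_power_real_cases[OF _ that] by auto
      then show ?thesis
      proof
        assume "t = 0"
        then show ?thesis
          unfolding L_def by (auto intro!: exI[of _ 1])
      next
        assume "t \<in> {-1, -3, 1, 3}"
        moreover have "Qsqrt_neg_of 3 t 1 = of_real 2 * Qsqrt_neg_of 3 (t / 2) (1 / 2)"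
          using Qsqrt_neg_of_scale[of 3 2 "t / 2" "1 / 2"] by (simp add: of_rat_complex_eq_of_real)
        ultimately show ?thesis
          unfolding L_def by (intro bexI[of _ "Qsqrt_neg_of 3 (t / 2) (1 / 2)"] exI[of _ 2]) auto
      qed
    qed
  qed
  ultimately show ?thesis
    by simp
qed

section \<open>Complex multiplication\<close>

lemma nonreal_root_of_rat_quadratic:
  fixes \<tau> :: complex
  assumes "A \<noteq> 0" "of_rat A * \<tau>\<^sup>2 + of_rat B * \<tau> + of_rat C = 0" "\<tau> \<notin> \<real>"
  shows "\<exists>d x y. squarefree d \<and> y \<noteq> 0 \<and> \<tau> = Qsqrt_neg_of d x y"
proof -
  define X Y where "X = Re \<tau>" and "Y = Im \<tau>"
  define x where "x = - B / (2 * A)"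
  define E where "E = x\<^sup>2 + (B * x + C) / A"
  have "Y \<noteq> 0"
    using assms(3) by (simp add: Y_def complex_is_Real_iff)
  have "Im (of_rat A * \<tau>\<^sup>2 + of_rat B * \<tau> + of_rat C) = 0"
    using assms(2) by simp
  then have "(of_rat A * (2 * X) + of_rat B) * Y = 0"
    by (simp add: X_def Y_def of_rat_complex_eq_of_real power2_eq_square algebra_simps)
  then have "of_rat A * (2 * X) + of_rat B = 0"
    using \<open>Y \<noteq> 0\<close> by simp
  then have X: "X = of_rat x"
    using assms(1) by (simp add: x_def of_rat_divide of_rat_minus of_rat_mult field_simps)
  have "Re (of_rat A * \<tau>\<^sup>2 + of_rat B * \<tau> + of_rat C) = 0"
    using assms(2) by simp
  then have "of_rat A * (X\<^sup>2 - Y\<^sup>2) + of_rat B * X + of_rat C = 0"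
    by (simp add: X_def Y_def of_rat_complex_eq_of_real power2_eq_square algebra_simps)
  then have Y: "Y\<^sup>2 = of_rat E"
    using assms(1) unfolding X E_def
    by (simp add: of_rat_add of_rat_divide of_rat_mult of_rat_power field_simps)
  then have "E > 0"
    using \<open>Y \<noteq> 0\<close> by (metis zero_less_of_rat_iff zero_less_power2)
  then obtain d f where "squarefree d" "E = of_nat d * f\<^sup>2"
    using rat_pos_eq_squarefree_times_square by blast
  then have "Y\<^sup>2 = (of_rat f * sqrt (real d))\<^sup>2" "f \<noteq> 0"
    using Y \<open>E > 0\<close> by (auto simp: power_mult_distrib of_rat_mult of_rat_power)
  then obtain y where "y \<noteq> 0" "Y = of_rat y * sqrt (real d)"
    by (metis power2_eq_iff mult_minus_left of_rat_minus neg_equal_0_iff_equal)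
  then have "\<tau> = Qsqrt_neg_of d x y"
    using X by (simp add: complex_eq_iff X_def Y_def)
  then show ?thesis
    using \<open>squarefree d\<close> \<open>y \<noteq> 0\<close> by blast
qed

definition rat_span :: "complex \<Rightarrow> complex \<Rightarrow> complex set" where
  "rat_span a b = {of_rat p * a + of_rat q * b | p q :: rat. True}"

lemma rat_span_iff: "z \<in> rat_span a b \<longleftrightarrow> (\<exists>p q. z = of_rat p * a + of_rat q * b)"
  by (simp add: rat_span_def)

lemma rat_spanI: "of_rat p * a + of_rat q * b \<in> rat_span a b"
  by (auto simp: rat_span_iff)

lemma image_mult_rat_span: "(\<lambda>v. c * v) ` rat_span a b = rat_span (c * a) (c * b)"
proof (intro equalityI subsetI)
  fix z
  assume "z \<in> (\<lambda>v. c * v) ` rat_span a b"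
  then obtain v where "v \<in> rat_span a b" "z = c * v"
    by blast
  then obtain p q where "z = c * (of_rat p * a + of_rat q * b)"
    unfolding rat_span_iff by blast
  then have "z = of_rat p * (c * a) + of_rat q * (c * b)"
    by (simp add: algebra_simps)
  then show "z \<in> rat_span (c * a) (c * b)"
    by (simp add: rat_spanI)
next
  fix z
  assume "z \<in> rat_span (c * a) (c * b)"
  then obtain p q where "z = of_rat p * (c * a) + of_rat q * (c * b)"
    by (auto simp: rat_span_iff)
  then have "z = c * (of_rat p * a + of_rat q * b)"
    by (simp add: algebra_simps)
  then show "z \<in> (\<lambda>v. c * v) ` rat_span a b"
    by (rule image_eqI[OF _ rat_spanI])
qed

lemma rat_span_1_Qsqrt_neg_of:
  assumes "y \<noteq> 0"
  shows "rat_span 1 (Qsqrt_neg_of d x y) = Qsqrt_neg d"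
proof
  have "of_rat p * 1 + of_rat q * Qsqrt_neg_of d x y = Qsqrt_neg_of d (p + q * x) (q * y)" for p q
    by (simp add: Qsqrt_neg_of_def of_rat_add of_rat_mult algebra_simps)
  then show "rat_span 1 (Qsqrt_neg_of d x y) \<subseteq> Qsqrt_neg d"
    by (auto simp: rat_span_iff)
  show "Qsqrt_neg d \<subseteq> rat_span 1 (Qsqrt_neg_of d x y)"
  proof
    fix z
    assume "z \<in> Qsqrt_neg d"
    then obtain u w where "z = Qsqrt_neg_of d u w"
      by (auto simp: Qsqrt_neg_iff)
    also have "\<dots> = of_rat (u - w / y * x) * 1 + of_rat (w / y) * Qsqrt_neg_of d x y"
      using assms by (simp add: Qsqrt_neg_of_def of_rat_diff algebra_simps flip: of_rat_mult)
    finally show "z \<in> rat_span 1 (Qsqrt_neg_of d x y)"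
      by (simp only: rat_spanI)
  qed
qed

lemma homothetic_sym:
  assumes "homothetic V W"
  shows "homothetic W V"
proof -
  obtain l where "l \<noteq> 0" "W = (\<lambda>v. l * v) ` V"
    using assms unfolding homothetic_def by blast
  then have "V = (\<lambda>w. inverse l * w) ` W"
    by (simp add: image_image mult.assoc[symmetric])
  then show ?thesis
    unfolding homothetic_def using \<open>l \<noteq> 0\<close> by (intro exI[of _ "inverse l"]) simp
qed

lemma is_CM_homothetic:
  assumes "homothetic V W" "is_CM V"
  shows "is_CM W"
proof -
  obtain l where W: "W = (\<lambda>v. l * v) ` V"
    using assms(1) unfolding homothetic_def by blast
  obtain m where "m \<notin> \<rat>" and m: "(\<lambda>v. m * v) ` V \<subseteq> V"
    using assms(2) unfolding is_CM_def by blast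
  have "(\<lambda>w. m * w) ` W = (\<lambda>v. l * v) ` ((\<lambda>v. m * v) ` V)"
    unfolding W by (simp add: image_image algebra_simps)
  also have "\<dots> \<subseteq> W"
    unfolding W using m by (rule image_mono)
  finally show ?thesis
    unfolding is_CM_def using \<open>m \<notin> \<rat>\<close> by blast
qed

lemma is_CM_Qsqrt_neg:
  assumes "d > 0"
  shows "is_CM (Qsqrt_neg d)"
proof -
  have "sqrt_neg d \<notin> \<real>"
    using assms Qsqrt_neg_of_in_Reals_iff[of d 0 1] by (simp add: Qsqrt_neg_of_def)
  then have "sqrt_neg d \<notin> \<rat>"
    by (auto elim!: Rats_cases simp: of_rat_complex_eq_of_real)
  moreover have "(\<lambda>v. sqrt_neg d * v) ` Qsqrt_neg d \<subseteq> Qsqrt_neg d"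
    using Qsqrt_neg_mult_closed[of "sqrt_neg d" d] Qsqrt_neg_of_in_Qsqrt_neg[of d 0 1]
    by (auto simp: Qsqrt_neg_of_def)
  ultimately show ?thesis
    unfolding is_CM_def by blast
qed

lemma space_homothetic_rat_span_1:
  assumes "is_space V"
  shows "\<exists>\<tau>. \<tau> \<notin> \<real> \<and> homothetic V (rat_span 1 \<tau>)"
proof -
  obtain a b where ind: "\<forall>p q :: rat. of_rat p * a + of_rat q * b = 0 \<longrightarrow> p = 0 \<and> q = 0"
    and V: "V = {of_rat p * a + of_rat q * b | p q :: rat. True}"
    using assms unfolding is_space_def by blast
  have "a \<noteq> 0"
    using ind[rule_format, of 1 0] by auto
  obtain u w where uw: "u \<in> V" "w \<in> V"
    and indep: "\<And>r s :: real. of_real r * u + of_real s * w = 0 \<Longrightarrow> r = 0 \<and> s = 0"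
    using assms unfolding is_space_def by blast
  define \<tau> where "\<tau> = b / a"
  have hom: "(\<lambda>v. inverse a * v) ` V = rat_span 1 \<tau>"
    unfolding V rat_span_def[symmetric] image_mult_rat_span
    using \<open>a \<noteq> 0\<close> by (simp add: \<tau>_def divide_inverse mult.commute)
  have "\<tau> \<notin> \<real>"
  proof
    assume "\<tau> \<in> \<real>"
    then have "(\<lambda>v. inverse a * v) ` V \<subseteq> \<real>"
      unfolding hom by (auto simp: rat_span_iff of_rat_complex_eq_of_real)
    then have "inverse a * u \<in> \<real>" "inverse a * w \<in> \<real>"
      using uw by blast+
    then obtain r s where r: "inverse a * u = of_real r" and s: "inverse a * w = of_real s"
      by (auto elim!: Reals_cases)
    have "of_real s * u + of_real (- r) * w = 0"
      using \<open>a \<noteq> 0\<close> r s by (simp add: field_simps)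
    then have "r = 0"
      using indep[of s "- r"] by simp
    then have "u = 0"
      using r \<open>a \<noteq> 0\<close> by simp
    then show False
      using indep[of 1 0] by simp
  qed
  moreover have "homothetic V (rat_span 1 \<tau>)"
    unfolding homothetic_def using \<open>a \<noteq> 0\<close> hom by (intro exI[of _ "inverse a"]) simp
  ultimately show ?thesis
    by blast
qed

lemma is_CM_rat_span_1_imp_quadratic:
  assumes "is_CM (rat_span 1 \<tau>)"
  shows "\<exists>A B C. A \<noteq> 0 \<and> of_rat A * \<tau>\<^sup>2 + of_rat B * \<tau> + of_rat C = 0"
proof -
  obtain m where "m \<notin> \<rat>" and m: "(\<lambda>v. m * v) ` rat_span 1 \<tau> \<subseteq> rat_span 1 \<tau>"
    using assms unfolding is_CM_def by blast
  have "1 \<in> rat_span 1 \<tau>" "\<tau> \<in> rat_span 1 \<tau>"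
    using rat_spanI[of 1 1 0 \<tau>] rat_spanI[of 0 1 1 \<tau>] by simp_all
  then have "m * 1 \<in> rat_span 1 \<tau>" "m * \<tau> \<in> rat_span 1 \<tau>"
    using m by blast+
  then obtain p q r s where pq: "m = of_rat p + of_rat q * \<tau>" and rs: "m * \<tau> = of_rat r + of_rat s * \<tau>"
    unfolding rat_span_iff by auto
  have "q \<noteq> 0"
    using \<open>m \<notin> \<rat>\<close> pq by auto
  moreover have "of_rat q * \<tau>\<^sup>2 + of_rat (p - s) * \<tau> + of_rat (- r) = 0"
    using rs unfolding pq by (simp add: of_rat_diff of_rat_minus power2_eq_square algebra_simps)
  ultimately show ?thesis
    by blast
qed

lemma is_CM_iff_homothetic_Qsqrt_neg:
  assumes "is_space V"
  shows "is_CM V \<longleftrightarrow> (\<exists>d. d > 0 \<and> squarefree d \<and> homothetic V (Qsqrt_neg d))"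
proof
  assume "is_CM V"
  obtain \<tau> where "\<tau> \<notin> \<real>" "homothetic V (rat_span 1 \<tau>)"
    using space_homothetic_rat_span_1[OF assms] by blast
  moreover from this obtain A B C where "A \<noteq> 0" "of_rat A * \<tau>\<^sup>2 + of_rat B * \<tau> + of_rat C = 0"
    using is_CM_rat_span_1_imp_quadratic is_CM_homothetic \<open>is_CM V\<close> by blast
  ultimately obtain d x y where "squarefree d" "y \<noteq> 0" "\<tau> = Qsqrt_neg_of d x y"
    using nonreal_root_of_rat_quadratic by blast
  moreover from this have "d > 0"
    by (auto intro!: gr0I)
  ultimately show "\<exists>d. d > 0 \<and> squarefree d \<and> homothetic V (Qsqrt_neg d)"
    using \<open>homothetic V (rat_span 1 \<tau>)\<close> rat_span_1_Qsqrt_neg_of by auto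
next
  assume "\<exists>d. d > 0 \<and> squarefree d \<and> homothetic V (Qsqrt_neg d)"
  then show "is_CM V"
    using is_CM_Qsqrt_neg is_CM_homothetic homothetic_sym by blast
qed

theorem theorem4p2:
  shows "(\<forall>V. is_space V \<longrightarrow>
            (is_CM V \<longleftrightarrow> (\<exists>d::nat. d > 0 \<and> squarefree d \<and> homothetic V (Qsqrt_neg d))))
       \<and> (\<forall>d::nat. d > 0 \<and> squarefree d \<and> d \<noteq> 1 \<and> d \<noteq> 3 \<longrightarrow>
            angles_given_by (Qsqrt_neg d) {sqrt_neg d})
       \<and> angles_given_by (Qsqrt_neg 1) {\<i>, \<i> + 1, \<i> - 1}
       \<and> (let \<zeta> = (-1 + sqrt_neg 3) / 2 in
            angles_given_by (Qsqrt_neg 3) {sqrt_neg 3, \<zeta>, \<zeta> - 1, \<zeta> + 1, \<zeta> + 2})"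
proof (intro conjI allI impI)
  fix V
  assume "is_space V"
  then show "is_CM V \<longleftrightarrow> (\<exists>d. d > 0 \<and> squarefree d \<and> homothetic V (Qsqrt_neg d))"
    by (rule is_CM_iff_homothetic_Qsqrt_neg)
next
  fix d :: nat
  assume "d > 0 \<and> squarefree d \<and> d \<noteq> 1 \<and> d \<noteq> 3"
  then show "angles_given_by (Qsqrt_neg d) {sqrt_neg d}"
    using angles_given_by_Qsqrt_neg by blast
next
  show "angles_given_by (Qsqrt_neg 1) {\<i>, \<i> + 1, \<i> - 1}"
    by (rule angles_given_by_Qsqrt_neg_1)
next
  show "let \<zeta> = (-1 + sqrt_neg 3) / 2 in
      angles_given_by (Qsqrt_neg 3) {sqrt_neg 3, \<zeta>, \<zeta> - 1, \<zeta> + 1, \<zeta> + 2}"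
    unfolding Let_def by (rule angles_given_by_Qsqrt_neg_3)
qed

end
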